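(* Let $A=(i_1,\dots,i_a)$ be an ordered tuple of distinct elements of $I_d$, $\alpha\in\mathbb{Z}_2^{a,\mathrm{ev}}$, and $r\ge0$. Then the X-cycle $A^{(r,\alpha)}$ commutes with every $x_j$, $j\in I_d$; i.e. it lies in the centralizer $\mathcal{C}_X$ of the polynomial subalgebra of $\mathcal{G}$.
   Context: Fix a commutative ring $R$ and integers $l,d\ge1$; $I_a=\{1,\dots,a\}$. Let $\mathcal{G}$ be the $R$-superalgebra that is free as an $R$-module with basis $\{x_1^{m_1}\cdots x_d^{m_d}\,w\,c_1^{e_1}\cdots c_d^{e_d}: 0\le m_i\le l-1,\ w\in\Sigma_d,\ e_i\in\{0,1\}\}$, with multiplication determined by: the $x_i$ commute and $x_i^l=0$; $w\in\Sigma_d$ multiply as in the symmetric group (composition right to left); $c_i^2=1$, $c_ic_j=-c_jc_i$ for $i\ne j$; $wx_i=x_{w(i)}w$, $wc_i=c_{w(i)}w$; $x_ic_i=-c_ix_i$, $x_ic_j=c_jx_i$ for $i\ne j$. For an ordered tuple $A=(i_1,\dots,i_a)$ of distinct elements of $I_d$, $\sigma_A$ is the cycle $i_1\mapsto i_2\mapsto\dots\mapsto i_a\mapsto i_1$. For $\alpha\in\mathbb{Z}_2^a$: $|\alpha|=\sum_j\alpha_j$; $\mathbb{Z}_2^{a,\mathrm{ev}}$ is the set of $\alpha$ with $|\alpha|$ even; $c_\alpha(A)=c_{i_1}^{\alpha_1}\cdots c_{i_a}^{\alpha_a}$; $\epsilon^\alpha_j=\prod_{k<j}(-1)^{\alpha_k}$.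 For $r\ge0$, $\alpha\in\mathbb{Z}_2^{a,\mathrm{ev}}$: $h^\alpha_r(A)=\sum_{r_1+\dots+r_a=(a-1)(l-1)+r,\ r_j\ge0}\prod_j(\epsilon^\alpha_jx_{i_j})^{r_j}$ and $A^{(r,\alpha)}=h^\alpha_r(A)\sigma_Ac_\alpha(A)$. *)

theory Defs
  imports "HOL-Combinatorics.Combinatorics"
begin

(* Basis elements x^m w c^e of the superalgebra G, encoded as triples (m, w, e)
   with m : exponent vector, w : permutation of {1..d}, e : parity vector. *)
type_synonym gbasis = "(nat \<Rightarrow> nat) \<times> (nat \<Rightarrow> nat) \<times> (nat \<Rightarrow> bool)"

definition gB :: "nat \<Rightarrow> nat \<Rightarrow> gbasis set" where
  "gB l d = {(m, w, e). (\<forall>i. i \<notin> {1..d} \<longrightarrow> m i = 0) \<and> (\<forall>i\<in>{1..d}. m i < l)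
      \<and> w permutes {1..d} \<and> (\<forall>i. i \<notin> {1..d} \<longrightarrow> \<not> e i)}"

(* number of inversions of a word; c_{j_1}...c_{j_k} = (-1)^inv * c^{parity} *)
definition inversions :: "nat list \<Rightarrow> nat" where
  "inversions L = card {(p, q). p < q \<and> q < length L \<and> L ! q < L ! p}"

(* product of two basis elements: (sign, basis element); sign 0 if some x_i^l appears *)
definition bprod :: "nat \<Rightarrow> nat \<Rightarrow> gbasis \<Rightarrow> gbasis \<Rightarrow> int \<times> gbasis" where
  "bprod l d b1 b2 = (case b1 of (m, w, e) \<Rightarrow> case b2 of (m', w', e') \<Rightarrow>
     let s1 = (-1::int) ^ (\<Sum>i\<in>{1..d}. if e i then m' i else 0);
         m'' = (\<lambda>k. m k + m' (inv w k));
         L = map (inv w') (filter e [1..<d+1]) @ filter e' [1..<d+1];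
         s2 = (-1::int) ^ inversions L;
         e'' = (\<lambda>k. e (w' k) \<noteq> e' k);
         ok = (\<forall>k\<in>{1..d}. m'' k < l)
     in (if ok then s1 * s2 else 0, (m'', w \<circ> w', e'')))"

(* elements of G: coefficient functions on the basis (zero outside gB l d) *)
definition gmul :: "nat \<Rightarrow> nat \<Rightarrow> (gbasis \<Rightarrow> 'r::comm_ring_1) \<Rightarrow> (gbasis \<Rightarrow> 'r) \<Rightarrow> (gbasis \<Rightarrow> 'r)" where
  "gmul l d f g = (\<lambda>b. \<Sum>b1\<in>gB l d. \<Sum>b2\<in>gB l d.
      if snd (bprod l d b1 b2) = b then of_int (fst (bprod l d b1 b2)) * f b1 * g b2 else 0)"

definition gsmul :: "'r::comm_ring_1 \<Rightarrow> (gbasis \<Rightarrow> 'r) \<Rightarrow> (gbasis \<Rightarrow> 'r)" where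
  "gsmul c f = (\<lambda>b. c * f b)"

(* the element x^m w c^e (zero if it is not a basis element, e.g. some m_i >= l) *)
definition gmono :: "nat \<Rightarrow> nat \<Rightarrow> gbasis \<Rightarrow> (gbasis \<Rightarrow> 'r::comm_ring_1)" where
  "gmono l d b = (\<lambda>b'. if b \<in> gB l d \<and> b' = b then 1 else 0)"

definition gone :: "nat \<Rightarrow> nat \<Rightarrow> (gbasis \<Rightarrow> 'r::comm_ring_1)" where
  "gone l d = gmono l d (\<lambda>_. 0, id, \<lambda>_. False)"

definition gx :: "nat \<Rightarrow> nat \<Rightarrow> nat \<Rightarrow> (gbasis \<Rightarrow> 'r::comm_ring_1)" where
  "gx l d i = gmono l d (\<lambda>k. if k = i then 1 else 0, id, \<lambda>_. False)"

definition gc :: "nat \<Rightarrow> nat \<Rightarrow> nat \<Rightarrow> (gbasis \<Rightarrow> 'r::comm_ring_1)" where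
  "gc l d i = gmono l d (\<lambda>_. 0, id, \<lambda>k. k = i)"

definition gperm :: "nat \<Rightarrow> nat \<Rightarrow> (nat \<Rightarrow> nat) \<Rightarrow> (gbasis \<Rightarrow> 'r::comm_ring_1)" where
  "gperm l d w = gmono l d (\<lambda>_. 0, w, \<lambda>_. False)"

definition gpow :: "nat \<Rightarrow> nat \<Rightarrow> (gbasis \<Rightarrow> 'r::comm_ring_1) \<Rightarrow> nat \<Rightarrow> (gbasis \<Rightarrow> 'r)" where
  "gpow l d f n = (gmul l d f ^^ n) (gone l d)"

definition gprod_list :: "nat \<Rightarrow> nat \<Rightarrow> (gbasis \<Rightarrow> 'r::comm_ring_1) list \<Rightarrow> (gbasis \<Rightarrow> 'r)" where
  "gprod_list l d fs = foldr (gmul l d) fs (gone l d)"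

(* epsilon^alpha_j (0-indexed j): product over k < j of (-1)^alpha_k *)
definition eps :: "bool list \<Rightarrow> nat \<Rightarrow> 'r::comm_ring_1" where
  "eps \<alpha> j = (-1) ^ length (filter id (take j \<alpha>))"

definition hpoly :: "nat \<Rightarrow> nat \<Rightarrow> nat list \<Rightarrow> bool list \<Rightarrow> nat \<Rightarrow> (gbasis \<Rightarrow> 'r::comm_ring_1)" where
  "hpoly l d A \<alpha> r = (\<lambda>b. \<Sum>rs\<in>{rs. length rs = length A \<and> sum_list rs = (length A - 1) * (l - 1) + r}.
      gprod_list l d (map (\<lambda>j. gpow l d (gsmul (eps \<alpha> j) (gx l d (A ! j))) (rs ! j)) [0..<length A]) b)"

definition calpha :: "nat \<Rightarrow> nat \<Rightarrow> nat list \<Rightarrow> bool list \<Rightarrow> (gbasis \<Rightarrow> 'r::comm_ring_1)" where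
  "calpha l d A \<alpha> = gprod_list l d (map (\<lambda>j. if \<alpha> ! j then gc l d (A ! j) else gone l d) [0..<length A])"

(* A^{(r,alpha)} = h^alpha_r(A) sigma_A c_alpha(A); sigma_A = cycle i_1 -> i_2 -> ... -> i_a -> i_1 *)
definition Xcycle :: "nat \<Rightarrow> nat \<Rightarrow> nat list \<Rightarrow> nat \<Rightarrow> bool list \<Rightarrow> (gbasis \<Rightarrow> 'r::comm_ring_1)" where
  "Xcycle l d A r \<alpha> = gmul l d (gmul l d (hpoly l d A \<alpha> r) (gperm l d (cycle_of_list A))) (calpha l d A \<alpha>)"

end

theory Submission
  imports Defs
begin

text \<open>Up to a scalar, the X-cycle is the sum of the terms \<open>\<epsilon>^\<rho> x^\<rho> \<sigma>_A c^E\<close> over the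
  exponent tuples \<open>\<rho>\<close> of degree \<open>N = (a - 1)(l - 1) + r\<close>. Left multiplication by \<open>x_j\<close>
  raises the exponent of \<open>x_j\<close>; from the right, \<open>x_j\<close> has to pass \<open>c^E\<close> and \<open>\<sigma>_A\<close> and
  becomes \<open>\<plusminus>x_{\<sigma>_A(j)}\<close>. For \<open>j \<notin> A\<close> the two products agree at once. For \<open>j = i_q\<close>
  compare the coefficients of a basis monomial \<open>x^n\<close> of degree \<open>N + 1\<close>: as every
  exponent is below \<open>l\<close>, this degree forces \<open>n(i_p) \<ge> 1\<close> for all \<open>p\<close>, so the two
  coefficients are \<open>\<epsilon>^n \<epsilon>_{q+1}\<close> and \<open>\<epsilon>^n \<epsilon>_q\<close>, and \<open>\<epsilon>_q = (-1)^{\<alpha>_q} \<epsilon>_{q+1}\<close>; for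
  \<open>q = a\<close> (where \<open>q + 1\<close> is read as \<open>1\<close>) this uses that \<open>|\<alpha>|\<close> is even.\<close>

section \<open>Multiplication of basis elements\<close>

lemma finite_gB: "finite (gB l d)"
proof -
  have "gB l d \<subseteq> {m. \<forall>x. (x \<in> {1..d} \<longrightarrow> m x \<in> {..<l}) \<and> (x \<notin> {1..d} \<longrightarrow> m x = 0)}
     \<times> {w. w permutes {1..d}} \<times> {e. \<forall>x. (x \<in> {1..d} \<longrightarrow> e x \<in> UNIV) \<and> (x \<notin> {1..d} \<longrightarrow> e x = False)}"
    by (auto simp: gB_def)
  moreover have "finite \<dots>"
    by (intro finite_cartesian_product finite_set_of_finite_funs finite_permutations) auto
  ultimately show ?thesis by (rule finite_subset)
qed

lemma gB_iff: "(m, w, e) \<in> gB l d \<longleftrightarrow> (\<forall>i. i \<notin> {1..d} \<longrightarrow> m i = 0) \<and> (\<forall>i\<in>{1..d}. m i < l)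
      \<and> w permutes {1..d} \<and> (\<forall>i. i \<notin> {1..d} \<longrightarrow> \<not> e i)"
  unfolding gB_def by auto

lemma gmono_not_basis: "b \<notin> gB l d \<Longrightarrow> gmono l d b = (\<lambda>_. 0)"
  unfolding gmono_def by auto

lemma gsmul_1 [simp]: "gsmul 1 f = f"
  and gsmul_0 [simp]: "gsmul 0 f = (\<lambda>_. 0)"
  and gsmul_zero [simp]: "gsmul c (\<lambda>_. 0) = (\<lambda>_. 0)"
  and gsmul_gsmul: "gsmul a (gsmul b f) = gsmul (a * b) f"
  unfolding gsmul_def by (auto simp: mult_ac)

lemma sum_if_const: "(\<Sum>x\<in>S. if P then f x else 0) = (if P then sum f S else 0)"
  by (cases P) auto

lemma gmul_gmono:
  assumes "b1 \<in> gB l d" "b2 \<in> gB l d"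
  shows "gmul l d (gmono l d b1 :: gbasis \<Rightarrow> 'r::comm_ring_1) (gmono l d b2)
     = gsmul (of_int (fst (bprod l d b1 b2))) (gmono l d (snd (bprod l d b1 b2)))"
proof -
  let ?P = "bprod l d b1 b2"
  have product_in_gB: "snd ?P \<in> gB l d" if "fst ?P \<noteq> 0"
  proof -
    obtain m w e m' w' e' where b: "b1 = (m, w, e)" "b2 = (m', w', e')"
      by (cases b1, cases b2) auto
    have wp: "w permutes {1..d}" "w' permutes {1..d}" using assms b by (auto simp: gB_def)
    have "inv w i = i" if "i \<notin> {1..d}" for i
      using permutes_inv[OF wp(1)] that by (simp add: permutes_not_in)
    moreover have "w' i = i" if "i \<notin> {1..d}" for i
      using wp(2) that by (simp add: permutes_not_in)
    moreover have "\<forall>k\<in>{1..d}. m k + m' (inv w k) < l"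
      using that b by (auto simp: bprod_def Let_def split: if_splits)
    ultimately show ?thesis
      using assms permutes_compose[OF wp(2) wp(1)] unfolding b bprod_def Let_def gB_def by auto
  qed
  show ?thesis
  proof
    fix b
    have "gmul l d (gmono l d b1 :: gbasis \<Rightarrow> 'r) (gmono l d b2) b
      = (\<Sum>c1\<in>gB l d. \<Sum>c2\<in>gB l d. if c1 = b1 then (if c2 = b2 then
           (if snd ?P = b then of_int (fst ?P) else 0) else 0) else 0)"
      unfolding gmul_def gmono_def by (intro sum.cong refl) (auto simp: assms)
    also have "\<dots> = (if snd ?P = b then of_int (fst ?P) else 0)"
      using assms by (simp add: sum_if_const finite_gB)
    also have "\<dots> = gsmul (of_int (fst ?P)) (gmono l d (snd ?P)) b"
      unfolding gsmul_def gmono_def using product_in_gB by (cases "fst ?P = 0") auto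
    finally show "gmul l d (gmono l d b1 :: gbasis \<Rightarrow> 'r) (gmono l d b2) b
      = gsmul (of_int (fst ?P)) (gmono l d (snd ?P)) b" .
  qed
qed

lemma gmul_gmono_not_basis:
  assumes "b1 \<notin> gB l d \<or> b2 \<notin> gB l d"
  shows "gmul l d (gmono l d b1 :: gbasis \<Rightarrow> 'r::comm_ring_1) (gmono l d b2) = (\<lambda>_. 0)"
  using assms unfolding gmul_def gmono_def by (auto intro!: sum.neutral)

lemma gmul_sum_left:
  "gmul l d (\<lambda>b. \<Sum>i\<in>I. f i b) g = (\<lambda>b. \<Sum>i\<in>I. gmul l d (f i) g b)"
proof
  fix b
  have "gmul l d (\<lambda>b. \<Sum>i\<in>I. f i b) g b = (\<Sum>b1\<in>gB l d. \<Sum>b2\<in>gB l d. \<Sum>i\<in>I.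
     if snd (bprod l d b1 b2) = b then of_int (fst (bprod l d b1 b2)) * f i b1 * g b2 else 0)"
    unfolding gmul_def by (intro sum.cong refl) (auto simp: sum_distrib_left sum_distrib_right mult.assoc)
  also have "\<dots> = (\<Sum>i\<in>I. \<Sum>b1\<in>gB l d. \<Sum>b2\<in>gB l d.
     if snd (bprod l d b1 b2) = b then of_int (fst (bprod l d b1 b2)) * f i b1 * g b2 else 0)"
    by (simp add: sum.swap[of _ I])
  finally show "gmul l d (\<lambda>b. \<Sum>i\<in>I. f i b) g b = (\<Sum>i\<in>I. gmul l d (f i) g b)"
    unfolding gmul_def .
qed

lemma gmul_sum_right:
  "gmul l d f (\<lambda>b. \<Sum>i\<in>I. g i b) = (\<lambda>b. \<Sum>i\<in>I. gmul l d f (g i) b)"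
proof
  fix b
  have "gmul l d f (\<lambda>b. \<Sum>i\<in>I. g i b) b = (\<Sum>b1\<in>gB l d. \<Sum>b2\<in>gB l d. \<Sum>i\<in>I.
     if snd (bprod l d b1 b2) = b then of_int (fst (bprod l d b1 b2)) * f b1 * g i b2 else 0)"
    unfolding gmul_def by (intro sum.cong refl) (auto simp: sum_distrib_left sum_distrib_right mult.assoc)
  also have "\<dots> = (\<Sum>i\<in>I. \<Sum>b1\<in>gB l d. \<Sum>b2\<in>gB l d.
     if snd (bprod l d b1 b2) = b then of_int (fst (bprod l d b1 b2)) * f b1 * g i b2 else 0)"
    by (simp add: sum.swap[of _ I])
  finally show "gmul l d f (\<lambda>b. \<Sum>i\<in>I. g i b) b = (\<Sum>i\<in>I. gmul l d f (g i) b)"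
    unfolding gmul_def .
qed

lemma gmul_zero_left [simp]: "gmul l d (\<lambda>_. 0) (g :: gbasis \<Rightarrow> 'r::comm_ring_1) = (\<lambda>_. 0)"
  unfolding gmul_def by (simp only: mult_zero_right mult_zero_left) simp

lemma gmul_gsmul_left: "gmul l d (gsmul c f) g = gsmul c (gmul l d f g)"
  unfolding gmul_def gsmul_def
  by (auto simp: sum_distrib_left if_distrib sum_if_const mult_ac intro!: sum.cong)

lemma gmul_gsmul_right: "gmul l d f (gsmul c g) = gsmul c (gmul l d f g)"
  unfolding gmul_def gsmul_def
  by (auto simp: sum_distrib_left if_distrib sum_if_const mult_ac intro!: sum.cong)

lemma inversions_sorted: "sorted L \<Longrightarrow> inversions L = 0"
proof -
  assume "sorted L"
  then have "{(p, q). p < q \<and> q < length L \<and> L ! q < L ! p} = {}"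
    by (auto simp: sorted_iff_nth_mono) (meson leD less_imp_le_nat)
  then show ?thesis unfolding inversions_def by (simp only: card.empty)
qed

lemma inversions_filter_upt: "inversions (filter P [a..<b]) = 0"
  by (rule inversions_sorted) (simp add: sorted_wrt_filter)

lemma gmul_xmono_xmono:
  "gmul l d (gmono l d (m, id, \<lambda>_. False) :: gbasis \<Rightarrow> 'r::comm_ring_1) (gmono l d (m', id, \<lambda>_. False))
   = gmono l d (\<lambda>k. m k + m' k, id, \<lambda>_. False)"
proof (cases "(m, id, \<lambda>_. False) \<in> gB l d \<and> (m', id, \<lambda>_::nat. False) \<in> gB l d")
  case True
  have "bprod l d (m, id, \<lambda>_. False) (m', id, \<lambda>_. False) =
     (if \<forall>k\<in>{1..d}. m k + m' k < l then 1 else 0, (\<lambda>k. m k + m' k, id, \<lambda>_. False))"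
    by (simp add: bprod_def Let_def inversions_def)
  moreover have "(\<lambda>k. m k + m' k, id, \<lambda>_::nat. False) \<notin> gB l d"
    if "\<not> (\<forall>k\<in>{1..d}. m k + m' k < l)"
    using that by (auto simp: gB_iff)
  ultimately show ?thesis
    using True by (cases "\<forall>k\<in>{1..d}. m k + m' k < l") (simp_all add: gmul_gmono gmono_not_basis)
next
  case False
  then have "(\<lambda>k. m k + m' k, id, \<lambda>_::nat. False) \<notin> gB l d"
    by (auto simp: gB_iff)
      (metis add_lessD1 atLeastAtMost_iff, metis add_lessD1 add.commute atLeastAtMost_iff)
  then show ?thesis using False by (simp add: gmul_gmono_not_basis gmono_not_basis)
qed

lemma gmul_xmono_perm:
  assumes "\<sigma> permutes {1..d}" "l \<ge> 1"
  shows "gmul l d (gmono l d (m, id, \<lambda>_. False) :: gbasis \<Rightarrow> 'r::comm_ring_1) (gmono l d (\<lambda>_. 0, \<sigma>, \<lambda>_. False))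
   = gmono l d (m, \<sigma>, \<lambda>_. False)"
proof (cases "(m, id, \<lambda>_. False) \<in> gB l d")
  case True
  have "bprod l d (m, id, \<lambda>_. False) (\<lambda>_. 0, \<sigma>, \<lambda>_. False) = (1, (m, \<sigma>, \<lambda>_. False))"
    using True by (simp add: bprod_def Let_def inversions_def gB_iff)
  moreover have "(\<lambda>_::nat. 0::nat, \<sigma>, \<lambda>_::nat. False) \<in> gB l d" using assms by (auto simp: gB_iff)
  ultimately show ?thesis using True by (simp add: gmul_gmono)
next
  case False
  then have "(m, \<sigma>, \<lambda>_::nat. False) \<notin> gB l d" by (auto simp: gB_iff)
  then show ?thesis using False by (simp add: gmul_gmono_not_basis gmono_not_basis)
qed

lemma gmul_mono_cmono:
  assumes "\<sigma> permutes {1..d}" "l \<ge> 1" "\<forall>i. i \<notin> {1..d} \<longrightarrow> \<not> E i"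
  shows "gmul l d (gmono l d (m, \<sigma>, \<lambda>_. False) :: gbasis \<Rightarrow> 'r::comm_ring_1) (gmono l d (\<lambda>_. 0, id, E))
   = gmono l d (m, \<sigma>, E)"
proof (cases "(m, \<sigma>, \<lambda>_. False) \<in> gB l d")
  case True
  have "bprod l d (m, \<sigma>, \<lambda>_. False) (\<lambda>_. 0, id, E) = (1, (m, \<sigma>, E))"
    using True by (simp add: bprod_def Let_def inversions_filter_upt gB_iff del: upt_Suc)
  moreover have "(\<lambda>_::nat. 0::nat, id, E) \<in> gB l d" using assms by (auto simp: gB_iff)
  ultimately show ?thesis using True by (simp add: gmul_gmono)
next
  case False
  then have "(m, \<sigma>, E) \<notin> gB l d" using assms by (auto simp: gB_iff)
  then show ?thesis using False by (simp add: gmul_gmono_not_basis gmono_not_basis)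
qed

lemma gmul_cmono_cmono:
  assumes "l \<ge> 1" "\<forall>i. i \<notin> {1..d} \<longrightarrow> \<not> e i" "\<forall>i. i \<notin> {1..d} \<longrightarrow> \<not> e' i"
  shows "\<exists>s. gmul l d (gmono l d (\<lambda>_. 0, id, e) :: gbasis \<Rightarrow> 'r::comm_ring_1) (gmono l d (\<lambda>_. 0, id, e'))
   = gsmul s (gmono l d (\<lambda>_. 0, id, \<lambda>k. e k \<noteq> e' k))"
proof -
  have "(\<lambda>_::nat. 0::nat, id, e) \<in> gB l d" "(\<lambda>_::nat. 0::nat, id, e') \<in> gB l d"
    using assms by (auto simp: gB_iff)
  moreover have "snd (bprod l d (\<lambda>_. 0, id, e) (\<lambda>_. 0, id, e')) = (\<lambda>_. 0, id, \<lambda>k. e k \<noteq> e' k)"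
    by (simp add: bprod_def Let_def)
  ultimately show ?thesis using gmul_gmono[where 'r='r] by auto
qed

abbreviation xunit :: "nat \<Rightarrow> nat \<Rightarrow> nat" where
  "xunit i \<equiv> \<lambda>k. if k = i then 1 else 0"

lemma gmul_gmono_gx:
  assumes "\<sigma> permutes {1..d}" "j \<in> {1..d}" "\<forall>i. i \<notin> {1..d} \<longrightarrow> \<not> E i"
  shows "gmul l d (gmono l d (m, \<sigma>, E) :: gbasis \<Rightarrow> 'r::comm_ring_1) (gx l d j)
   = gsmul ((-1) ^ (if E j then 1 else 0)) (gmono l d (\<lambda>k. m k + xunit (\<sigma> j) k, \<sigma>, E))"
proof (cases "(m, \<sigma>, E) \<in> gB l d \<and> (xunit j, id, \<lambda>_::nat. False) \<in> gB l d")
  case True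
  have sign: "(\<Sum>i = Suc 0..d. if E i then if i = j then Suc 0 else 0 else 0) = (if E j then 1 else 0)"
  proof -
    have "(\<Sum>i = Suc 0..d. if E i then if i = j then Suc 0 else 0 else 0)
       = (\<Sum>i = Suc 0..d. if i = j then (if E j then 1 else 0) else 0)"
      by (intro sum.cong) auto
    then show ?thesis using assms(2) by simp
  qed
  have "(inv \<sigma> k = j) = (k = \<sigma> j)" for k
    using assms(1) by (metis permutes_inverses(1) permutes_inverses(2))
  then have "bprod l d (m, \<sigma>, E) (xunit j, id, \<lambda>_. False)
     = (if \<forall>k\<in>{1..d}. m k + xunit (\<sigma> j) k < l then (-1) ^ (if E j then 1 else 0) else 0,
        (\<lambda>k. m k + xunit (\<sigma> j) k, \<sigma>, E))"
    unfolding bprod_def Let_def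
    by (simp add: sign inversions_filter_upt cong: if_cong del: upt_Suc)
  moreover have "(\<lambda>k. m k + xunit (\<sigma> j) k, \<sigma>, E) \<notin> gB l d"
    if "\<not> (\<forall>k\<in>{1..d}. m k + xunit (\<sigma> j) k < l)"
    using that by (auto simp: gB_iff)
  ultimately show ?thesis
    using True unfolding gx_def
    by (cases "\<forall>k\<in>{1..d}. m k + xunit (\<sigma> j) k < l") (simp_all add: gmul_gmono gmono_not_basis)
next
  case False
  have "\<sigma> j \<in> {1..d}" using assms(2) permutes_in_image[OF assms(1), of j] by blast
  with False have "(\<lambda>k. m k + xunit (\<sigma> j) k, \<sigma>, E) \<notin> gB l d"
    using assms by (auto simp: gB_iff split: if_splits)
      (metis, metis, metis Suc_lessD atLeastAtMost_iff)
  moreover have "gmul l d (gmono l d (m, \<sigma>, E) :: gbasis \<Rightarrow> 'r) (gx l d j) = (\<lambda>_. 0)"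
    unfolding gx_def by (rule gmul_gmono_not_basis) (use False in auto)
  ultimately show ?thesis by (simp add: gmono_not_basis)
qed

lemma gmul_gx_gmono:
  assumes "\<sigma> permutes {1..d}" "j \<in> {1..d}" "\<forall>i. i \<notin> {1..d} \<longrightarrow> \<not> E i"
  shows "gmul l d (gx l d j :: gbasis \<Rightarrow> 'r::comm_ring_1) (gmono l d (m, \<sigma>, E))
   = gmono l d (\<lambda>k. m k + xunit j k, \<sigma>, E)"
proof (cases "(m, \<sigma>, E) \<in> gB l d \<and> (xunit j, id, \<lambda>_::nat. False) \<in> gB l d")
  case True
  have "bprod l d (xunit j, id, \<lambda>_. False) (m, \<sigma>, E)
     = (if \<forall>k\<in>{1..d}. m k + xunit j k < l then 1 else 0, (\<lambda>k. m k + xunit j k, \<sigma>, E))"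
    unfolding bprod_def Let_def
    by (simp add: inversions_filter_upt add.commute cong: if_cong del: upt_Suc)
  moreover have "(\<lambda>k. m k + xunit j k, \<sigma>, E) \<notin> gB l d" if "\<not> (\<forall>k\<in>{1..d}. m k + xunit j k < l)"
    using that by (auto simp: gB_iff)
  ultimately show ?thesis
    using True unfolding gx_def
    by (cases "\<forall>k\<in>{1..d}. m k + xunit j k < l") (simp_all add: gmul_gmono gmono_not_basis)
next
  case False
  then have "(\<lambda>k. m k + xunit j k, \<sigma>, E) \<notin> gB l d"
    using assms by (auto simp: gB_iff split: if_splits) (metis Suc_lessD atLeastAtMost_iff)
  moreover have "gmul l d (gx l d j :: gbasis \<Rightarrow> 'r) (gmono l d (m, \<sigma>, E)) = (\<lambda>_. 0)"
    unfolding gx_def by (rule gmul_gmono_not_basis) (use False in auto)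
  ultimately show ?thesis by (simp add: gmono_not_basis)
qed

section \<open>Normal form of an X-cycle\<close>

definition weak_compositions :: "nat \<Rightarrow> nat \<Rightarrow> nat list set" where
  "weak_compositions a N = {rs. length rs = a \<and> sum_list rs = N}"

text \<open>The summand of \<open>h^\<alpha>_r(A)\<close> indexed by the exponent tuple \<open>\<rho>\<close> is
  \<open>hcoeff A \<alpha> \<rho>\<close> times the monomial with exponent vector \<open>hexp A \<rho>\<close>; tuples are
  indexed from \<open>0\<close>.\<close>

definition hexp :: "nat list \<Rightarrow> nat list \<Rightarrow> nat \<Rightarrow> nat" where
  "hexp A rs k = (\<Sum>j<length A. if A ! j = k then rs ! j else 0)"

definition hcoeff :: "nat list \<Rightarrow> bool list \<Rightarrow> nat list \<Rightarrow> 'r::comm_ring_1" where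
  "hcoeff A \<alpha> rs = (\<Prod>j<length A. eps \<alpha> j ^ (rs ! j))"

text \<open>The element \<open>x^\<delta> h \<sigma> c^E\<close>, where \<open>h\<close> is the sum of the summands of degree \<open>N\<close>.\<close>

definition hterms :: "nat \<Rightarrow> nat \<Rightarrow> nat list \<Rightarrow> bool list \<Rightarrow> nat \<Rightarrow> (nat \<Rightarrow> nat)
    \<Rightarrow> (nat \<Rightarrow> nat) \<Rightarrow> (nat \<Rightarrow> bool) \<Rightarrow> gbasis \<Rightarrow> 'r::comm_ring_1" where
  "hterms l d A \<alpha> N \<delta> \<sigma> E = (\<lambda>b. \<Sum>rs\<in>weak_compositions (length A) N.
      gsmul (hcoeff A \<alpha> rs) (gmono l d (\<lambda>k. hexp A rs k + \<delta> k, \<sigma>, E)) b)"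

definition cparity :: "nat list \<Rightarrow> bool list \<Rightarrow> nat \<Rightarrow> bool" where
  "cparity A \<alpha> k = odd (length (filter (\<lambda>j. \<alpha> ! j \<and> A ! j = k) [0..<length A]))"

lemma gpow_gsmul_gx:
  "gpow l d (gsmul c (gx l d i) :: gbasis \<Rightarrow> 'r::comm_ring_1) n
   = gsmul (c ^ n) (gmono l d (\<lambda>k. n * xunit i k, id, \<lambda>_. False))"
proof (induction n)
  case 0
  show ?case unfolding gpow_def gone_def by (simp add: id_def)
next
  case (Suc n)
  have "gpow l d (gsmul c (gx l d i) :: gbasis \<Rightarrow> 'r) (Suc n)
     = gmul l d (gsmul c (gx l d i)) (gpow l d (gsmul c (gx l d i)) n)"
    unfolding gpow_def by simp
  also have "\<dots> = gsmul (c * c ^ n) (gmul l d (gx l d i) (gmono l d (\<lambda>k. n * xunit i k, id, \<lambda>_. False)))"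
    unfolding Suc by (simp add: gmul_gsmul_left gmul_gsmul_right gsmul_gsmul mult_ac)
  also have "\<dots> = gsmul (c ^ Suc n) (gmono l d (\<lambda>k. Suc n * xunit i k, id, \<lambda>_. False))"
    unfolding gx_def gmul_xmono_xmono by simp
  finally show ?case .
qed

lemma gprod_list_xmonos:
  "gprod_list l d (map (\<lambda>j. gsmul (c j) (gmono l d (m j, id, \<lambda>_. False))) xs :: (gbasis \<Rightarrow> 'r::comm_ring_1) list)
   = gsmul (prod_list (map c xs)) (gmono l d (\<lambda>k. \<Sum>j\<leftarrow>xs. m j k, id, \<lambda>_. False))"
proof (induction xs)
  case Nil
  show ?case unfolding gprod_list_def gone_def by (simp add: id_def)
next
  case (Cons x xs)
  have "gprod_list l d (map (\<lambda>j. gsmul (c j) (gmono l d (m j, id, \<lambda>_. False))) (x # xs) :: (gbasis \<Rightarrow> 'r) list)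
     = gmul l d (gsmul (c x) (gmono l d (m x, id, \<lambda>_. False)))
         (gprod_list l d (map (\<lambda>j. gsmul (c j) (gmono l d (m j, id, \<lambda>_. False))) xs))"
    unfolding gprod_list_def by simp
  also have "\<dots> = gsmul (prod_list (map c (x # xs))) (gmono l d (\<lambda>k. \<Sum>j\<leftarrow>x # xs. m j k, id, \<lambda>_. False))"
    unfolding Cons by (simp add: gmul_gsmul_left gmul_gsmul_right gsmul_gsmul gmul_xmono_xmono mult_ac)
  finally show ?case .
qed

lemma hpoly_normal_form:
  "(hpoly l d A \<alpha> r :: gbasis \<Rightarrow> 'r::comm_ring_1)
   = hterms l d A \<alpha> ((length A - 1) * (l - 1) + r) (\<lambda>_. 0) id (\<lambda>_. False)"
proof -
  have "(gprod_list l d (map (\<lambda>j. gpow l d (gsmul (eps \<alpha> j) (gx l d (A ! j))) (rs ! j)) [0..<length A])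
      :: gbasis \<Rightarrow> 'r) = gsmul (hcoeff A \<alpha> rs) (gmono l d (hexp A rs, id, \<lambda>_. False))" for rs
  proof -
    have "(\<lambda>k. \<Sum>j\<leftarrow>[0..<length A]. rs ! j * xunit (A ! j) k) = hexp A rs"
      unfolding hexp_def interv_sum_list_conv_sum_set_nat by (auto simp: lessThan_atLeast0 intro!: sum.cong)
    moreover have "prod_list (map (\<lambda>j. eps \<alpha> j ^ (rs ! j)) [0..<length A]) = (hcoeff A \<alpha> rs :: 'r)"
      unfolding hcoeff_def by (simp add: prod.distinct_set_conv_list[symmetric] lessThan_atLeast0)
    ultimately show ?thesis
      by (simp add: gpow_gsmul_gx gprod_list_xmonos[where m="\<lambda>j k. rs ! j * xunit (A ! j) k"])
  qed
  then show ?thesis unfolding hpoly_def hterms_def weak_compositions_def by simp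
qed

lemma gprod_list_cs:
  assumes "l \<ge> 1" "\<forall>j\<in>set xs. A ! j \<in> {1..d}"
  shows "\<exists>s. (gprod_list l d (map (\<lambda>j. if \<alpha> ! j then gc l d (A ! j) else gone l d) xs) :: gbasis \<Rightarrow> 'r::comm_ring_1)
     = gsmul s (gmono l d (\<lambda>_. 0, id, \<lambda>k. odd (length (filter (\<lambda>j. \<alpha> ! j \<and> A ! j = k) xs))))"
  using assms(2)
proof (induction xs)
  case Nil
  show ?case unfolding gprod_list_def gone_def by (rule exI[of _ 1]) (simp add: id_def)
next
  case (Cons x xs)
  let ?E = "\<lambda>k. odd (length (filter (\<lambda>j. \<alpha> ! j \<and> A ! j = k) xs))"
  have "\<forall>j\<in>set xs. A ! j \<in> {1..d}" using Cons.prems by simp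
  from Cons.IH[OF this] obtain s where s: "(gprod_list l d (map (\<lambda>j. if \<alpha> ! j then gc l d (A ! j) else gone l d) xs)
      :: gbasis \<Rightarrow> 'r) = gsmul s (gmono l d (\<lambda>_. 0, id, ?E))"
    by blast
  have cx: "(if \<alpha> ! x then gc l d (A ! x) else gone l d)
      = (gmono l d (\<lambda>_. 0, id, \<lambda>k. \<alpha> ! x \<and> A ! x = k) :: gbasis \<Rightarrow> 'r)"
    unfolding gc_def gone_def by (auto intro!: arg_cong[where f="gmono l d"])
  have outside_x: "\<forall>i. i \<notin> {1..d} \<longrightarrow> \<not> (\<alpha> ! x \<and> A ! x = i)" using Cons.prems by auto
  have outside_xs: "\<forall>i. i \<notin> {1..d} \<longrightarrow> \<not> ?E i"
  proof (intro allI impI)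
    fix i assume "i \<notin> {1..d}"
    then have "filter (\<lambda>j. \<alpha> ! j \<and> A ! j = i) xs = []" using Cons.prems by (auto simp: filter_empty_conv)
    then show "\<not> ?E i" by simp
  qed
  obtain s' where
    s': "gmul l d (gmono l d (\<lambda>_. 0, id, \<lambda>k. \<alpha> ! x \<and> A ! x = k) :: gbasis \<Rightarrow> 'r) (gmono l d (\<lambda>_. 0, id, ?E))
      = gsmul s' (gmono l d (\<lambda>_. 0, id, \<lambda>k. (\<alpha> ! x \<and> A ! x = k) \<noteq> ?E k))"
    using gmul_cmono_cmono[OF assms(1) outside_x outside_xs] by blast
  have parity: "(\<lambda>k. (\<alpha> ! x \<and> A ! x = k) \<noteq> ?E k)
      = (\<lambda>k. odd (length (filter (\<lambda>j. \<alpha> ! j \<and> A ! j = k) (x # xs))))"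
    by auto
  show ?case
    unfolding gprod_list_def list.map foldr_Cons o_apply
    unfolding gprod_list_def[symmetric] s cx gmul_gsmul_right s' parity gsmul_gsmul
    by (intro exI[of _ "s * s'"]) (simp add: mult.commute id_def)
qed

lemma cparity_notin:
  assumes "j \<notin> set A"
  shows "\<not> cparity A \<alpha> j"
proof -
  have "filter (\<lambda>i. \<alpha> ! i \<and> A ! i = j) [0..<length A] = []"
    using assms by (auto simp: filter_empty_conv)
  then show ?thesis unfolding cparity_def by simp
qed

lemma cparity_outside:
  assumes "set A \<subseteq> {1..d}" "i \<notin> {1..d}"
  shows "\<not> cparity A \<alpha> i"
  using assms cparity_notin by blast

lemma Xcycle_normal_form:
  assumes "l \<ge> 1" "set A \<subseteq> {1..d}"
  shows "\<exists>s. (Xcycle l d A r \<alpha> :: gbasis \<Rightarrow> 'r::comm_ring_1)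
    = gsmul s (hterms l d A \<alpha> ((length A - 1) * (l - 1) + r) (\<lambda>_. 0) (cycle_of_list A) (cparity A \<alpha>))"
proof -
  have "\<forall>j<length A. A ! j \<in> {1..d}" using assms(2) nth_mem by blast
  then have "\<forall>j\<in>set [0..<length A]. A ! j \<in> {1..d}" by simp
  from gprod_list_cs[OF assms(1) this, of \<alpha>] obtain s where
    s: "(calpha l d A \<alpha> :: gbasis \<Rightarrow> 'r) = gsmul s (gmono l d (\<lambda>_. 0, id, cparity A \<alpha>))"
    unfolding calpha_def cparity_def[abs_def] by blast
  have \<sigma>: "cycle_of_list A permutes {1..d}"
    using cycle_permutes assms(2) by (rule permutes_subset)
  have E: "\<forall>i. i \<notin> {1..d} \<longrightarrow> \<not> cparity A \<alpha> i" using cparity_outside[OF assms(2)] by blast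
  have hterms_perm_c: "gmul l d (gmul l d (hterms l d A \<alpha> N \<delta> id (\<lambda>_. False)) (gperm l d (cycle_of_list A)))
      (gmono l d (\<lambda>_. 0, id, cparity A \<alpha>))
    = (hterms l d A \<alpha> N \<delta> (cycle_of_list A) (cparity A \<alpha>) :: gbasis \<Rightarrow> 'r)" for N \<delta>
    unfolding hterms_def gperm_def gmul_sum_left gmul_gsmul_left
    by (simp add: gmul_xmono_perm[OF \<sigma> assms(1)] gmul_mono_cmono[OF \<sigma> assms(1) E])
  show ?thesis
    unfolding Xcycle_def hpoly_normal_form s gmul_gsmul_right hterms_perm_c by blast
qed

lemma gmul_hterms_gx:
  assumes "\<sigma> permutes {1..d}" "j \<in> {1..d}" "\<forall>i. i \<notin> {1..d} \<longrightarrow> \<not> E i"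
  shows "gmul l d (hterms l d A \<alpha> N \<delta> \<sigma> E :: gbasis \<Rightarrow> 'r::comm_ring_1) (gx l d j)
    = gsmul ((-1) ^ (if E j then 1 else 0)) (hterms l d A \<alpha> N (\<lambda>k. \<delta> k + xunit (\<sigma> j) k) \<sigma> E)"
  unfolding hterms_def gmul_sum_left gmul_gsmul_left
  by (simp add: gmul_gmono_gx[OF assms] gsmul_def sum_distrib_left add.assoc mult_ac)

lemma gmul_gx_hterms:
  assumes "\<sigma> permutes {1..d}" "j \<in> {1..d}" "\<forall>i. i \<notin> {1..d} \<longrightarrow> \<not> E i"
  shows "gmul l d (gx l d j) (hterms l d A \<alpha> N \<delta> \<sigma> E :: gbasis \<Rightarrow> 'r::comm_ring_1)
    = hterms l d A \<alpha> N (\<lambda>k. \<delta> k + xunit j k) \<sigma> E"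
  unfolding hterms_def gmul_sum_right gmul_gsmul_right
  by (simp add: gmul_gx_gmono[OF assms] add.assoc)

section \<open>Coefficients of the shifted sums\<close>

lemma hexp_nth:
  assumes "distinct A" "i < length A"
  shows "hexp A rs (A ! i) = rs ! i"
proof -
  have "hexp A rs (A ! i) = (\<Sum>j<length A. if j = i then rs ! i else 0)"
    unfolding hexp_def using assms by (intro sum.cong) (auto simp: nth_eq_iff_index_eq)
  then show ?thesis using assms by simp
qed

lemma hexp_outside: "k \<notin> set A \<Longrightarrow> hexp A rs k = 0"
  unfolding hexp_def by (auto intro!: sum.neutral dest: nth_mem)

text \<open>The exponent tuple of \<open>x^n / x_{i_p}\<close>.\<close>

definition exps_dec :: "nat list \<Rightarrow> (nat \<Rightarrow> nat) \<Rightarrow> nat \<Rightarrow> nat list" where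
  "exps_dec A n p = map (\<lambda>i. n (A ! i) - (if i = p then 1 else 0)) [0..<length A]"

lemma hexp_plus_xunit_eq_iff:
  assumes "distinct A" "length rs = length A" "p < length A"
  shows "(\<lambda>k. hexp A rs k + xunit (A ! p) k) = n \<longleftrightarrow>
    (\<forall>k. k \<notin> set A \<longrightarrow> n k = 0) \<and> 1 \<le> n (A ! p) \<and> rs = exps_dec A n p"
proof
  assume eq: "(\<lambda>k. hexp A rs k + xunit (A ! p) k) = n"
  then have n: "n k = hexp A rs k + xunit (A ! p) k" for k by auto
  have "rs = exps_dec A n p"
  proof (rule nth_equalityI)
    show "length rs = length (exps_dec A n p)" using assms by (simp add: exps_dec_def)
    fix i assume "i < length rs"
    then have i: "i < length A" using assms by simp
    then have "(A ! i = A ! p) = (i = p)" using assms by (simp add: nth_eq_iff_index_eq)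
    then show "rs ! i = exps_dec A n p ! i"
      using i n[of "A ! i"] hexp_nth[OF assms(1) i] by (simp add: exps_dec_def)
  qed
  moreover have "A ! p \<in> set A" using assms by simp
  ultimately show "(\<forall>k. k \<notin> set A \<longrightarrow> n k = 0) \<and> 1 \<le> n (A ! p) \<and> rs = exps_dec A n p"
    using n hexp_outside by fastforce
next
  assume h: "(\<forall>k. k \<notin> set A \<longrightarrow> n k = 0) \<and> 1 \<le> n (A ! p) \<and> rs = exps_dec A n p"
  show "(\<lambda>k. hexp A rs k + xunit (A ! p) k) = n"
  proof
    fix k
    show "hexp A rs k + xunit (A ! p) k = n k"
    proof (cases "k \<in> set A")
      case True
      then obtain i where i: "i < length A" "k = A ! i" by (auto simp: in_set_conv_nth)
      have "(A ! i = A ! p) = (i = p)" using assms i by (simp add: nth_eq_iff_index_eq)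
      then show ?thesis using h i hexp_nth[OF assms(1) i(1)] by (auto simp: exps_dec_def)
    next
      case False
      then have "k \<noteq> A ! p" using assms by auto
      then show ?thesis using h False hexp_outside[OF False] by simp
    qed
  qed
qed

lemma finite_weak_compositions: "finite (weak_compositions a N)"
proof -
  have "weak_compositions a N \<subseteq> {xs. set xs \<subseteq> {0..N} \<and> length xs = a}"
    unfolding weak_compositions_def using member_le_sum_list by fastforce
  then show ?thesis using finite_lists_length_eq[of "{0..N}" a] finite_subset by blast
qed

lemma sum_list_exps_dec:
  assumes "p < length A" "1 \<le> n (A ! p)"
  shows "sum_list (exps_dec A n p) + 1 = (\<Sum>i<length A. n (A ! i))"
proof -
  have "sum_list (exps_dec A n p) + 1 = (\<Sum>i<length A. n (A ! i) - (if i = p then 1 else 0))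
      + (\<Sum>i<length A. if i = p then 1 else 0)"
    using assms unfolding exps_dec_def interv_sum_list_conv_sum_set_nat
    by (simp add: lessThan_atLeast0)
  also have "\<dots> = (\<Sum>i<length A. n (A ! i) - (if i = p then 1 else 0) + (if i = p then 1 else 0))"
    by (simp add: sum.distrib)
  also have "\<dots> = (\<Sum>i<length A. n (A ! i))"
    using assms by (intro sum.cong) auto
  finally show ?thesis .
qed

lemma hterms_apply_other:
  assumes "\<not> (w = \<sigma> \<and> e = E \<and> (n, \<sigma>, E) \<in> gB l d)"
  shows "(hterms l d A \<alpha> N \<delta> \<sigma> E :: gbasis \<Rightarrow> 'r::comm_ring_1) (n, w, e) = 0"
  using assms unfolding hterms_def gsmul_def gmono_def by (auto intro!: sum.neutral)

lemma hterms_xunit_apply: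
  assumes "distinct A" "p < length A" "(n, \<sigma>, E) \<in> gB l d"
  shows "(hterms l d A \<alpha> N (xunit (A ! p)) \<sigma> E :: gbasis \<Rightarrow> 'r::comm_ring_1) (n, \<sigma>, E)
    = (if (\<forall>k. k \<notin> set A \<longrightarrow> n k = 0) \<and> (\<Sum>i<length A. n (A ! i)) = N + 1 \<and> 1 \<le> n (A ! p)
       then hcoeff A \<alpha> (exps_dec A n p) else 0)"
proof -
  let ?C = "(\<forall>k. k \<notin> set A \<longrightarrow> n k = 0) \<and> 1 \<le> n (A ! p)"
  let ?W = "weak_compositions (length A) N"
  have "(hterms l d A \<alpha> N (xunit (A ! p)) \<sigma> E :: gbasis \<Rightarrow> 'r) (n, \<sigma>, E)
     = (\<Sum>rs\<in>?W. if rs = exps_dec A n p then (if ?C then hcoeff A \<alpha> rs else 0) else 0)"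
    unfolding hterms_def gsmul_def
  proof (intro sum.cong refl)
    fix rs assume "rs \<in> ?W"
    then have "length rs = length A" by (simp add: weak_compositions_def)
    from hexp_plus_xunit_eq_iff[OF assms(1) this assms(2), of n] assms(3)
    show "hcoeff A \<alpha> rs * gmono l d (\<lambda>k. hexp A rs k + xunit (A ! p) k, \<sigma>, E) (n, \<sigma>, E)
        = (if rs = exps_dec A n p then (if ?C then hcoeff A \<alpha> rs else 0) else 0)"
      unfolding gmono_def by auto
  qed
  also have "\<dots> = (if exps_dec A n p \<in> ?W then (if ?C then hcoeff A \<alpha> (exps_dec A n p) else 0) else 0)"
    by (simp add: finite_weak_compositions)
  also have "\<dots> = (if (\<forall>k. k \<notin> set A \<longrightarrow> n k = 0) \<and> (\<Sum>i<length A. n (A ! i)) = N + 1 \<and> 1 \<le> n (A ! p)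
       then hcoeff A \<alpha> (exps_dec A n p) else 0)"
    using sum_list_exps_dec[OF assms(2), of n] by (auto simp: exps_dec_def weak_compositions_def)
  finally show ?thesis .
qed

lemma pos_if_sum_exceeds:
  fixes f :: "nat \<Rightarrow> nat"
  assumes "\<And>i. i < a \<Longrightarrow> f i \<le> L" "p < a" "(\<Sum>i<a. f i) = (a - 1) * L + r + 1"
  shows "1 \<le> f p"
proof (rule ccontr)
  assume "\<not> 1 \<le> f p"
  then have "(\<Sum>i<a. f i) = (\<Sum>i\<in>{..<a} - {p}. f i)"
    using assms(2) by (simp add: sum.remove)
  also have "\<dots> \<le> card ({..<a} - {p}) * L"
    using sum_bounded_above[of "{..<a} - {p}" f L] assms(1) by auto
  also have "card ({..<a} - {p}) = a - 1" using assms(2) by simp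
  finally show False using assms(3) by simp
qed

lemma hcoeff_exps_dec:
  assumes "p < length A" "1 \<le> n (A ! p)"
  shows "(hcoeff A \<alpha> (exps_dec A n p) :: 'r::comm_ring_1)
    = (\<Prod>i<length A. eps \<alpha> i ^ n (A ! i)) * eps \<alpha> p"
proof -
  have eps_sq: "eps \<alpha> p * eps \<alpha> p = (1 :: 'r)" unfolding eps_def by (simp flip: power_add)
  obtain k where k: "n (A ! p) = Suc k" using assms(2) by (cases "n (A ! p)") auto
  have drop_factor: "eps \<alpha> p ^ k = (eps \<alpha> p ^ Suc k * eps \<alpha> p :: 'r)"
    by (simp only: power_Suc2 mult.assoc eps_sq mult_1_right)
  have "(hcoeff A \<alpha> (exps_dec A n p) :: 'r)
      = (\<Prod>i<length A. eps \<alpha> i ^ (n (A ! i) - (if i = p then 1 else 0)))"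
    unfolding hcoeff_def exps_dec_def by (intro prod.cong) auto
  also have "\<dots> = eps \<alpha> p ^ k * (\<Prod>i\<in>{..<length A} - {p}. eps \<alpha> i ^ n (A ! i))"
    using assms k by (simp add: prod.remove)
  also have "\<dots> = eps \<alpha> p ^ Suc k * (\<Prod>i\<in>{..<length A} - {p}. eps \<alpha> i ^ n (A ! i)) * eps \<alpha> p"
    unfolding drop_factor by (simp add: mult_ac)
  also have "\<dots> = (\<Prod>i<length A. eps \<alpha> i ^ n (A ! i)) * eps \<alpha> p"
    using assms k by (simp add: prod.remove)
  finally show ?thesis .
qed

lemma eps_cyclic_step:
  assumes "length \<alpha> = a" "q < a" "even (length (filter id \<alpha>))"
  shows "(-1) ^ (if \<alpha> ! q then 1 else 0) * eps \<alpha> (Suc q mod a) = (eps \<alpha> q :: 'r::comm_ring_1)"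
proof -
  let ?c = "length (filter id (take q \<alpha>))"
  let ?b = "if \<alpha> ! q then 1 else 0 :: nat"
  have count: "length (filter id (take (Suc q) \<alpha>)) = ?c + ?b"
    using assms by (simp add: take_Suc_conv_app_nth)
  show ?thesis
  proof (cases "Suc q < a")
    case True
    then show ?thesis unfolding eps_def using count by (simp add: power_add mult.assoc[symmetric] flip: power_add)
  next
    case False
    then have "Suc q = a" using assms by simp
    then have "even (?c + ?b)" using count assms by simp
    then have "((-1::'r) ^ ?b) = (-1) ^ ?c" by (cases "\<alpha> ! q") auto
    then show ?thesis unfolding eps_def using \<open>Suc q = a\<close> by simp
  qed
qed

lemma gB_exponent_pos:
  assumes "(n, \<sigma>, E) \<in> gB l d" "set A \<subseteq> {1..d}"
    and "(\<Sum>i<length A. n (A ! i)) = (length A - 1) * (l - 1) + r + 1" "p < length A"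
  shows "1 \<le> n (A ! p)"
proof -
  have "n (A ! i) \<le> l - 1" if "i < length A" for i
  proof -
    have "A ! i \<in> {1..d}" using that assms(2) nth_mem by blast
    then have "n (A ! i) < l" using assms(1) by (simp add: gB_iff)
    then show ?thesis by linarith
  qed
  then show ?thesis using pos_if_sum_exceeds[where f="\<lambda>i. n (A ! i)"] assms(3,4) by blast
qed

lemma hcoeff_exps_dec_cyclic_shift:
  assumes "length \<alpha> = length A" "even (length (filter id \<alpha>))" "q < length A"
    and "\<And>p. p < length A \<Longrightarrow> 1 \<le> n (A ! p)"
  shows "(-1) ^ (if \<alpha> ! q then 1 else 0) * hcoeff A \<alpha> (exps_dec A n (Suc q mod length A))
    = (hcoeff A \<alpha> (exps_dec A n q) :: 'r::comm_ring_1)"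
proof -
  have q': "Suc q mod length A < length A" using assms(3) by (intro mod_less_divisor) linarith
  have "(-1) ^ (if \<alpha> ! q then 1 else 0) * eps \<alpha> (Suc q mod length A) = (eps \<alpha> q :: 'r)"
    by (rule eps_cyclic_step[OF assms(1,3,2)])
  then show ?thesis
    unfolding hcoeff_exps_dec[of _ A n, OF q' assms(4)[OF q']]
      hcoeff_exps_dec[of q A n, OF assms(3) assms(4)[OF assms(3)]]
    by (metis mult.left_commute)
qed

lemma hterms_cyclic_shift:
  assumes "distinct A" "set A \<subseteq> {1..d}" "q < length A"
    and "length \<alpha> = length A" "even (length (filter id \<alpha>))"
  shows "gsmul ((-1) ^ (if \<alpha> ! q then 1 else 0))
      (hterms l d A \<alpha> ((length A - 1) * (l - 1) + r) (xunit (A ! (Suc q mod length A))) \<sigma> E)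
    = (hterms l d A \<alpha> ((length A - 1) * (l - 1) + r) (xunit (A ! q)) \<sigma> E :: gbasis \<Rightarrow> 'r::comm_ring_1)"
proof
  fix b :: gbasis
  obtain n w e where b: "b = (n, w, e)" by (cases b)
  let ?a = "length A"
  let ?N = "(?a - 1) * (l - 1) + r"
  let ?q' = "Suc q mod ?a"
  let ?C = "(\<forall>k. k \<notin> set A \<longrightarrow> n k = 0) \<and> (\<Sum>i<?a. n (A ! i)) = ?N + 1"
  have q': "?q' < ?a" using assms(3) by (intro mod_less_divisor) linarith
  show "gsmul ((-1) ^ (if \<alpha> ! q then 1 else 0)) (hterms l d A \<alpha> ?N (xunit (A ! ?q')) \<sigma> E) b
    = (hterms l d A \<alpha> ?N (xunit (A ! q)) \<sigma> E b :: 'r)"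
  proof (cases "w = \<sigma> \<and> e = E \<and> (n, \<sigma>, E) \<in> gB l d")
    case False
    then show ?thesis unfolding b gsmul_def by (simp add: hterms_apply_other)
  next
    case True
    then have bg: "(n, \<sigma>, E) \<in> gB l d" and b: "b = (n, \<sigma>, E)" using b by auto
    show ?thesis
    proof (cases ?C)
      case False
      then have "\<not> ((\<forall>k. k \<notin> set A \<longrightarrow> n k = 0) \<and> (\<Sum>i<?a. n (A ! i)) = ?N + 1 \<and> 1 \<le> n (A ! p))"
        for p by blast
      then show ?thesis
        unfolding b gsmul_def hterms_xunit_apply[OF assms(1) q' bg] hterms_xunit_apply[OF assms(1,3) bg]
        by (simp only: if_False mult_zero_right)
    next
      case True
      then have pos: "1 \<le> n (A ! p)" if "p < ?a" for p
        using gB_exponent_pos[OF bg assms(2) _ that] by simp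
      show ?thesis
        unfolding b gsmul_def hterms_xunit_apply[OF assms(1) q' bg] hterms_xunit_apply[OF assms(1,3) bg]
        using True pos[OF q'] pos[OF assms(3)] hcoeff_exps_dec_cyclic_shift[of \<alpha> A q n, OF assms(4,5,3) pos]
        by simp
    qed
  qed
qed

lemma cycle_of_list_nth:
  assumes "distinct A" "q < length A"
  shows "cycle_of_list A (A ! q) = A ! (Suc q mod length A)"
proof -
  have "map (cycle_of_list A) A = rotate1 A" using cyclic_rotation[OF assms(1), of 1] by simp
  then have "map (cycle_of_list A) A ! q = rotate1 A ! q" by simp
  then show ?thesis using assms(2) by (simp add: nth_rotate1)
qed

lemma cparity_nth:
  assumes "distinct A" "q < length A"
  shows "cparity A \<alpha> (A ! q) = \<alpha> ! q"
proof -
  have "{i. i < length [0..<length A] \<and> \<alpha> ! ([0..<length A] ! i) \<and> A ! ([0..<length A] ! i) = A ! q}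
      = (if \<alpha> ! q then {q} else {})"
    using assms by (auto simp: nth_eq_iff_index_eq)
  then show ?thesis unfolding cparity_def by (simp add: length_filter_conv_card)
qed

theorem mainTheorem10:
  fixes l d r :: nat and A :: "nat list" and \<alpha> :: "bool list"
  assumes "l \<ge> 1" and "d \<ge> 1"
    and "A \<noteq> []" and "distinct A" and "set A \<subseteq> {1..d}"
    and "length \<alpha> = length A" and "even (length (filter id \<alpha>))"
  shows "\<forall>j\<in>{1..d}. gmul l d (Xcycle l d A r \<alpha> :: gbasis \<Rightarrow> 'r::comm_ring_1) (gx l d j)
                    = gmul l d (gx l d j) (Xcycle l d A r \<alpha>)"
proof
  fix j assume j: "j \<in> {1..d}"
  let ?\<sigma> = "cycle_of_list A"
  let ?N = "(length A - 1) * (l - 1) + r"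
  let ?h = "\<lambda>\<delta>. hterms l d A \<alpha> ?N \<delta> ?\<sigma> (cparity A \<alpha>) :: gbasis \<Rightarrow> 'r"
  obtain s where X: "Xcycle l d A r \<alpha> = gsmul s (?h (\<lambda>_. 0))"
    using Xcycle_normal_form[OF assms(1,5)] by blast
  have \<sigma>: "?\<sigma> permutes {1..d}" using cycle_permutes assms(5) by (rule permutes_subset)
  have E: "\<forall>i. i \<notin> {1..d} \<longrightarrow> \<not> cparity A \<alpha> i" using cparity_outside[OF assms(5)] by blast
  have "gsmul ((-1) ^ (if cparity A \<alpha> j then 1 else 0)) (?h (xunit (?\<sigma> j))) = ?h (xunit j)"
  proof (cases "j \<in> set A")
    case False
    then show ?thesis by (simp add: id_outside_supp cparity_notin)
  next
    case True
    then obtain q where q: "q < length A" and jq: "j = A ! q" by (auto simp: in_set_conv_nth)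
    show ?thesis
      unfolding jq cycle_of_list_nth[OF assms(4) q] cparity_nth[OF assms(4) q]
      by (rule hterms_cyclic_shift[OF assms(4,5) q assms(6,7)])
  qed
  then show "gmul l d (Xcycle l d A r \<alpha> :: gbasis \<Rightarrow> 'r) (gx l d j) = gmul l d (gx l d j) (Xcycle l d A r \<alpha>)"
    unfolding X gmul_gsmul_left gmul_gsmul_right gmul_hterms_gx[OF \<sigma> j E] gmul_gx_hterms[OF \<sigma> j E]
    by (simp add: gsmul_gsmul mult.commute)
qed

end
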